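(* Let $X$ be a connected, non-bipartite strongly regular graph with parameters $(n,k,a,c)$ (every vertex has degree $k$, any two adjacent vertices have exactly $a$ common neighbours, any two distinct non-adjacent vertices have exactly $c$ common neighbours), where $k\ge 3$ and $k>c\ge 1$. Assume that $s^2=(a-c)^2+4(k-c)$ for some positive integer $s$, so that the eigenvalues of the adjacency matrix other than $k$ are the integers $\lambda_1=\frac{a-c+s}{2}=:e$ and $\lambda_2=\frac{a-c-s}{2}$ (so $e\ge 1$, $k=(e+1)c+e(e-a)$ and $\lambda_2=a-c-e$). Suppose the Krein parameter $$K_2=(k+\lambda_2)(\lambda_1+1)^2-(\lambda_2+1)(k+\lambda_2+2\lambda_1\lambda_2)$$ satisfies $K_2\ge 0$. Then $$c\le\begin{cases} e^2+e+2a & \text{if } e\ge 3,\\ e^2+e+3a & \text{if } e=1 \text{ or } e=2.\end{cases}$$ In particular, when $a=0$ we have $c\le e(e+1)$.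
   Context: The condition $K_2\ge 0$ is one of the Krein conditions. Expressed in terms of $a,c,e$, one has $K_2=P+Qc-ec^2$ with $P=(e+1)(e-a)(e^2-e+a)$ and $Q=e^3+(2a+1)e+a$. *)

theory Defs
  imports Main
begin

definition simple_graph :: "'a set \<Rightarrow> ('a \<Rightarrow> 'a \<Rightarrow> bool) \<Rightarrow> bool" where
  "simple_graph V E \<longleftrightarrow> finite V \<and>
     (\<forall>x y. E x y \<longrightarrow> x \<in> V \<and> y \<in> V) \<and>
     (\<forall>x y. E x y \<longrightarrow> E y x) \<and> (\<forall>x. \<not> E x x)"

definition graph_connected :: "'a set \<Rightarrow> ('a \<Rightarrow> 'a \<Rightarrow> bool) \<Rightarrow> bool" where
  "graph_connected V E \<longleftrightarrow> (\<forall>x\<in>V. \<forall>y\<in>V. E\<^sup>*\<^sup>* x y)"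

definition bipartite :: "'a set \<Rightarrow> ('a \<Rightarrow> 'a \<Rightarrow> bool) \<Rightarrow> bool" where
  "bipartite V E \<longleftrightarrow> (\<exists>A \<subseteq> V. \<forall>x\<in>V. \<forall>y\<in>V. E x y \<longrightarrow> (x \<in> A \<longleftrightarrow> y \<notin> A))"

definition strongly_regular ::
  "'a set \<Rightarrow> ('a \<Rightarrow> 'a \<Rightarrow> bool) \<Rightarrow> nat \<Rightarrow> nat \<Rightarrow> nat \<Rightarrow> nat \<Rightarrow> bool" where
  "strongly_regular V E n k a c \<longleftrightarrow> simple_graph V E \<and> card V = n \<and>
     (\<forall>x\<in>V. card {y\<in>V. E x y} = k) \<and>
     (\<forall>x\<in>V. \<forall>y\<in>V. E x y \<longrightarrow> card {z\<in>V. E x z \<and> E y z} = a) \<and>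
     (\<forall>x\<in>V. \<forall>y\<in>V. x \<noteq> y \<and> \<not> E x y \<longrightarrow> card {z\<in>V. E x z \<and> E y z} = c)"

end

theory Submission
  imports Defs
begin

text \<open>Eliminating \<open>k = e\<^sup>2 - e a + e c + c\<close> and \<open>\<lambda>\<^sub>2 = a - c - e\<close> turns the Krein
  condition \<open>K\<^sub>2 \<ge> 0\<close> into \<open>f(c) \<ge> 0\<close> for the concave quadratic
  \<open>f(x) = P + Q x - e x\<^sup>2\<close> below.  Evaluating \<open>f\<close> at the claimed bound plus one gives a
  negative value at a point beyond the vertex of the parabola, so \<open>f\<close> stays negative
  from there on and \<open>c\<close> cannot lie in that range.\<close>

definition krein_poly :: "int \<Rightarrow> int \<Rightarrow> int \<Rightarrow> int" where
  "krein_poly e a x =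
     (e + 1) * (e - a) * (e^2 - e + a) + (e^3 + (2*a + 1) * e + a) * x - e * x^2"

lemma concave_quadratic_neg_beyond:
  fixes e P Q x0 x :: "'a::linordered_idom"
  assumes "e > 0" and "Q < 2 * e * x0" and "P + Q * x0 - e * x0^2 < 0" and "x0 \<le> x"
  shows "P + Q * x - e * x^2 < 0"
proof -
  have "e * x0 \<le> e * x" using assms(1,4) by (simp add: mult_left_mono)
  hence "(x - x0) * (Q - e * (x + x0)) \<le> 0"
    using assms(2,4) by (intro mult_nonneg_nonpos) (auto simp: algebra_simps)
  moreover have "P + Q * x - e * x^2 = (P + Q * x0 - e * x0^2) + (x - x0) * (Q - e * (x + x0))"
    by (simp add: algebra_simps power2_eq_square)
  ultimately show ?thesis using assms(3) by linarith
qed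

lemma krein_poly_neg_beyond:
  assumes "e > 0" and "a \<ge> 0" and "x0 \<le> x"
    and "e^3 + (2*a + 1) * e + a < 2 * e * x0" and "krein_poly e a x0 < 0"
  shows "krein_poly e a x < 0"
  using assms concave_quadratic_neg_beyond[of e "e^3 + (2*a + 1) * e + a" x0
      "(e + 1) * (e - a) * (e^2 - e + a)" x]
  unfolding krein_poly_def by blast

lemma krein_poly_neg_if_ge_3:
  assumes e3: "e \<ge> 3" and a0: "a \<ge> 0" and x: "x > e^2 + e + 2*a"
  shows "krein_poly e a x < 0"
proof (rule krein_poly_neg_beyond)
  let ?x0 = "e^2 + e + 2*a + 1"
  have pos: "e^2 > 0" "e^3 > 0" using e3 by simp_all
  have "a * 1 \<le> a * (2 * e)" using a0 e3 by (intro mult_left_mono) auto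
  moreover have "2 * e * ?x0 - (e^3 + (2*a + 1) * e + a) = e^3 + 2 * e^2 + 2 * a * e + e - a"
    by (simp add: algebra_simps power2_eq_square power3_eq_cube)
  ultimately show "e^3 + (2*a + 1) * e + a < 2 * e * ?x0"
    using e3 pos by linarith
  have "3 * 3 \<le> e * e" using e3 by (intro mult_mono) auto
  hence "(3 * 3) * e \<le> e * e * e" using e3 by (intro mult_right_mono) auto
  hence "1 + 3*e - e^3 < 0" using e3 unfolding power3_eq_cube by linarith
  hence "a * (1 + 3*e - e^3) \<le> 0" and "a^2 * (1 - e) \<le> 0"
    using a0 e3 by (simp_all add: mult_nonneg_nonpos)
  moreover have "krein_poly e a ?x0 = -(e^3) - 2*e^2 + a * (1 + 3*e - e^3) + a^2 * (1 - e)"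
    unfolding krein_poly_def by (simp add: algebra_simps power2_eq_square power3_eq_cube)
  ultimately show "krein_poly e a ?x0 < 0" using pos by linarith
qed (use e3 a0 x in auto)

lemma krein_poly_neg_if_le_2:
  assumes e12: "e = 1 \<or> e = 2" and a0: "a \<ge> 0" and x: "x > e^2 + e + 3*a"
  shows "krein_poly e a x < 0"
proof (rule krein_poly_neg_beyond)
  let ?x0 = "e^2 + e + 3*a + 1"
  show "e^3 + (2*a + 1) * e + a < 2 * e * ?x0"
    using e12 a0 by auto
  have "krein_poly e a ?x0 = (if e = 1 then -(3 + a + 2 * a^2) else -(16 + 19*a + 6 * a^2))"
    using e12 unfolding krein_poly_def by (auto simp: algebra_simps power2_eq_square power3_eq_cube)
  moreover have "a^2 \<ge> 0" by simp
  ultimately show "krein_poly e a ?x0 < 0" using a0 by (smt (verit))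
qed (use e12 a0 x in auto)

lemma srg_eigenvalue_relations:
  fixes k a c s e l2 :: int
  assumes "s^2 = (a - c)^2 + 4 * (k - c)"
    and "2 * e = a - c + s" and "2 * l2 = a - c - s"
  shows "k = e^2 - e*a + e*c + c" and "l2 = a - c - e" and "s = e - l2"
proof -
  have "s = 2*e - a + c" using assms(2) by linarith
  hence "(2*e - a + c)^2 = (a - c)^2 + 4 * (k - c)" using assms(1) by simp
  hence "4 * k = 4 * (e^2 - e*a + e*c + c)" by (simp add: algebra_simps power2_eq_square)
  thus "k = e^2 - e*a + e*c + c" by simp
  show "l2 = a - c - e" and "s = e - l2" using assms(2,3) by linarith+
qed

lemma srg_eigenvalue_pos:
  fixes k a c s e l2 :: int
  assumes "s^2 = (a - c)^2 + 4 * (k - c)"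
    and "2 * e = a - c + s" and "2 * l2 = a - c - s"
    and "k > c" and "s > 0"
  shows "e > 0"
proof (rule ccontr)
  note rel = srg_eigenvalue_relations[OF assms(1-3)]
  assume "\<not> e > 0"
  moreover have "l2 < e" using rel(3) assms(5) by linarith
  ultimately have "e * l2 \<ge> 0" by (simp add: mult_nonpos_nonpos)
  moreover have "k - c = - (e * l2)"
    unfolding rel(1,2) by (simp add: algebra_simps power2_eq_square)
  ultimately show False using assms(4) by linarith
qed

lemma krein_condition_eq_krein_poly:
  fixes k a c s e l2 :: int
  assumes "s^2 = (a - c)^2 + 4 * (k - c)"
    and "2 * e = a - c + s" and "2 * l2 = a - c - s"
  shows "(k + l2) * (e + 1)^2 - (l2 + 1) * (k + l2 + 2 * e * l2) = krein_poly e a c"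
  unfolding srg_eigenvalue_relations(1,2)[OF assms] krein_poly_def
  by (simp add: algebra_simps power2_eq_square power3_eq_cube)

theorem theorem2p1:
  fixes V :: "'a set" and E :: "'a \<Rightarrow> 'a \<Rightarrow> bool"
    and n k a c :: nat and s e l2 :: int
  assumes srg: "strongly_regular V E n k a c"
    and conn: "graph_connected V E"
    and nonbip: "\<not> bipartite V E"
    and k3: "k \<ge> 3" and kc: "k > c" and c1: "c \<ge> 1"
    and spos: "s > 0"
    and s_sq: "s^2 = (int a - int c)^2 + 4 * (int k - int c)"
    and e_def: "2 * e = int a - int c + s"
    and l2_def: "2 * l2 = int a - int c - s"
    and krein: "(int k + l2) * (e + 1)^2 - (l2 + 1) * (int k + l2 + 2 * e * l2) \<ge> 0"
  shows "(e \<ge> 3 \<longrightarrow> int c \<le> e^2 + e + 2 * int a) \<and>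
         ((e = 1 \<or> e = 2) \<longrightarrow> int c \<le> e^2 + e + 3 * int a) \<and>
         (a = 0 \<longrightarrow> int c \<le> e * (e + 1))"
proof -
  have e0: "e > 0" using srg_eigenvalue_pos[OF s_sq e_def l2_def] kc spos by simp
  have f_nonneg: "krein_poly e (int a) (int c) \<ge> 0"
    using krein krein_condition_eq_krein_poly[OF s_sq e_def l2_def] by simp
  have large: "e \<ge> 3 \<Longrightarrow> int c \<le> e^2 + e + 2 * int a"
    using krein_poly_neg_if_ge_3[of e "int a" "int c"] f_nonneg by fastforce
  have small: "e = 1 \<or> e = 2 \<Longrightarrow> int c \<le> e^2 + e + 3 * int a"
    using krein_poly_neg_if_le_2[of e "int a" "int c"] f_nonneg by fastforce
  have "e \<ge> 3 \<or> e = 1 \<or> e = 2" using e0 by linarith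
  hence "a = 0 \<Longrightarrow> int c \<le> e * (e + 1)"
    using large small by (auto simp: algebra_simps power2_eq_square)
  with large small show ?thesis by blast
qed

end
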